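(* If $p$ is a prime number, then $J_{p-1}=2$, i.e. the only vectors $(\delta_0,\ldots,\delta_{p-1})\in\{-1,1\}^{p}$ with $\sum_{i=0}^{p-1}\delta_i\binom{p-1}{i}=0$ are $\delta_i=(-1)^i$ for all $i$ and $\delta_i=-(-1)^i$ for all $i$.
   Context: $J_n$ denotes the number of vectors $(\delta_0,\ldots,\delta_n)\in\{-1,1\}^{n+1}$ with $\sum_{i=0}^n\delta_i\binom{n}{i}=0$. *)

theory Defs
  imports Main "HOL-Computational_Algebra.Primes"
begin

text \<open>Sign vectors (delta_0,...,delta_n) in {-1,1}^(n+1), represented as functions
  nat => int that are -1 or 1 on {0..n} and 0 (fixed default) outside.\<close>
definition sign_vectors :: "nat \<Rightarrow> (nat \<Rightarrow> int) set" where
  "sign_vectors n = {d. (\<forall>i\<in>{0..n}. d i \<in> {-1, 1}) \<and> (\<forall>i. i > n \<longrightarrow> d i = 0)}"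

definition J_set :: "nat \<Rightarrow> (nat \<Rightarrow> int) set" where
  "J_set n = {d \<in> sign_vectors n. (\<Sum>i=0..n. d i * int (n choose i)) = 0}"

definition J :: "nat \<Rightarrow> nat" where
  "J n = card (J_set n)"

end

theory Submission
  imports Defs "HOL-Number_Theory.Cong"
begin

text \<open>Since \<open>(p-1 choose i) \<equiv> (-1)^i (mod p)\<close>, a vector \<open>d\<close> in \<open>J_set (p-1)\<close> yields
  \<open>p dvd S\<close> for \<open>S = \<Sum>i. d i * (-1)^i\<close>, a sum of \<open>p\<close> signs. Hence \<open>|S| \<le> p\<close>, and \<open>S \<noteq> 0\<close>
  (by parity for odd \<open>p\<close>, directly for \<open>p = 2\<close>), so \<open>S = \<plusminus>p\<close>, which forces all the signs
  \<open>d i * (-1)^i\<close> to agree.\<close>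

lemma choose_pred_prime_cong:
  assumes "prime p" "i < p"
  shows "[int ((p - 1) choose i) = (-1) ^ i] (mod int p)"
  using assms(2)
proof (induction i)
  case 0
  then show ?case by simp
next
  case (Suc i)
  have "p = Suc (p - 1)"
    using Suc.prems by simp
  then have pascal: "int (p choose Suc i) = int ((p - 1) choose i) + int ((p - 1) choose Suc i)"
    by (metis binomial_Suc_Suc of_nat_add)
  have "[int (p choose Suc i) = 0] (mod int p)"
    using dvd_choose_prime[of "Suc i" p] Suc.prems assms(1)
    by (simp add: cong_0_iff flip: of_nat_dvd_iff)
  with pascal have "[int ((p - 1) choose Suc i) = - int ((p - 1) choose i)] (mod int p)"
    by (simp add: cong_iff_dvd_diff dvd_minus_iff add.commute)
  also have "[- int ((p - 1) choose i) = - ((-1) ^ i)] (mod int p)"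
    using Suc by (intro cong_minus_minus_iff[THEN iffD2]) simp
  finally show ?case by simp
qed

lemma sum_choose_pred_prime_cong:
  assumes "prime p"
  shows "[(\<Sum>i=0..p - 1. d i * int ((p - 1) choose i)) = (\<Sum>i=0..p - 1. d i * (-1) ^ i)] (mod int p)"
proof (intro cong_sum cong_scalar_left)
  fix i
  assume "i \<in> {0..p - 1}"
  with prime_gt_0_nat[OF assms] have "i < p"
    by auto
  then show "[int ((p - 1) choose i) = (-1) ^ i] (mod int p)"
    by (rule choose_pred_prime_cong[OF assms])
qed

lemma abs_sum_signs_le_card:
  assumes "\<forall>i\<in>A. e i \<in> {-1, 1::int}"
  shows "\<bar>sum e A\<bar> \<le> int (card A)"
proof -
  have "\<bar>sum e A\<bar> \<le> (\<Sum>i\<in>A. \<bar>e i\<bar>)"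
    by (rule sum_abs)
  also have "\<dots> = int (card A)"
    using assms by (subst sum.cong[of A A _ "\<lambda>_. 1"]) auto
  finally show ?thesis .
qed

lemma sum_signs_eq_card_iff:
  assumes "finite A" "\<forall>i\<in>A. e i \<in> {-1, 1::int}"
  shows "sum e A = int (card A) \<longleftrightarrow> (\<forall>i\<in>A. e i = 1)"
proof -
  have "sum e A = int (card A) \<longleftrightarrow> (\<Sum>i\<in>A. 1 - e i) = 0"
    by (auto simp: sum_subtractf)
  also have "\<dots> \<longleftrightarrow> (\<forall>i\<in>A. e i = 1)"
    using assms by (subst sum_nonneg_eq_0_iff) auto
  finally show ?thesis .
qed

lemma even_sum_signs_add_card:
  assumes "\<forall>i\<in>A. e i \<in> {-1, 1::int}"
  shows "even (sum e A + int (card A))"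
proof -
  have "sum e A + int (card A) = (\<Sum>i\<in>A. e i + 1)"
    by (simp add: sum.distrib)
  also have "even \<dots>"
    using assms by (intro dvd_sum) auto
  finally show ?thesis .
qed

lemma signs_constant_if_abs_sum_eq_card:
  assumes "finite A" and signs: "\<forall>i\<in>A. e i \<in> {-1, 1::int}"
    and "\<bar>sum e A\<bar> = int (card A)"
  obtains c where "c \<in> {-1, 1}" "\<forall>i\<in>A. e i = c"
proof (cases "sum e A \<ge> 0")
  case True
  with assms(3) have "sum e A = int (card A)"
    by simp
  with sum_signs_eq_card_iff[OF assms(1) signs] have "\<forall>i\<in>A. e i = 1"
    by (rule iffD1)
  then show ?thesis
    by (rule that[rotated]) simp
next
  case False
  have neg_signs: "\<forall>i\<in>A. - e i \<in> {-1, 1}"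
    using signs by auto
  from False assms(3) have "sum (\<lambda>i. - e i) A = int (card A)"
    by (simp add: sum_negf)
  with sum_signs_eq_card_iff[OF assms(1) neg_signs] have "\<forall>i\<in>A. - e i = 1"
    by (rule iffD1)
  then have "\<forall>i\<in>A. e i = -1"
    by auto
  then show ?thesis
    by (rule that[rotated]) simp
qed

lemma abs_eq_if_dvd_nonzero_abs_le:
  fixes m s :: int
  assumes "m dvd s" "s \<noteq> 0" "\<bar>s\<bar> \<le> m"
  shows "\<bar>s\<bar> = m"
proof -
  obtain k where k: "s = m * k"
    using assms(1) by blast
  have "m > 0"
    using assms(2,3) by simp
  with k assms(3) have "m * \<bar>k\<bar> \<le> m"
    by (simp add: abs_mult)
  with \<open>m > 0\<close> have "\<bar>k\<bar> \<le> 1"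
    by (simp add: mult_le_cancel_left1)
  moreover have "k \<noteq> 0"
    using k assms(2) by simp
  ultimately have "\<bar>k\<bar> = 1"
    by linarith
  with k \<open>m > 0\<close> show ?thesis
    by (simp add: abs_mult)
qed

lemma alternating_sign_vector_in_J_set:
  assumes "n > 0" "c \<in> {-1, 1}"
  shows "(\<lambda>i. if i \<le> n then c * (-1) ^ i else 0) \<in> J_set n"
proof -
  have "(\<Sum>i=0..n. c * (-1) ^ i * int (n choose i)) = c * (\<Sum>i\<le>n. (-1) ^ i * int (n choose i))"
    by (simp add: sum_distrib_left atLeast0AtMost mult.assoc)
  also have "\<dots> = 0"
    using choose_alternating_sum[OF assms(1), where 'a=int] by simp
  finally show ?thesis
    using assms(2) by (auto simp: J_set_def sign_vectors_def minus_one_power_iff)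
qed

lemma J_set_prime_pred_alternating:
  assumes p: "prime p" and d: "d \<in> J_set (p - 1)"
  obtains c where "c \<in> {-1, 1}" "d = (\<lambda>i. if i \<le> p - 1 then c * (-1) ^ i else 0)"
proof -
  define n where "n = p - 1"
  have p_gt: "p > 1"
    using p prime_gt_1_nat by blast
  have signs: "\<forall>i\<in>{0..n}. d i \<in> {-1, 1}" and zero: "\<forall>i>n. d i = 0"
    and balanced: "(\<Sum>i=0..n. d i * int (n choose i)) = 0"
    using d unfolding J_set_def sign_vectors_def n_def by auto
  define e where "e i = d i * (-1) ^ i" for i
  define S where "S = sum e {0..n}"
  have e_signs: "\<forall>i\<in>{0..n}. e i \<in> {-1, 1}"
    using signs by (auto simp: e_def minus_one_power_iff)
  have card: "card {0..n} = p"
    using p_gt by (simp add: n_def)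
  have "int p dvd S"
    using sum_choose_pred_prime_cong[OF p, of d] balanced
    unfolding S_def e_def n_def by (metis cong_0_iff cong_sym)
  moreover have "S \<noteq> 0"
  proof (cases "p = 2")
    case True
    then have "n = 1"
      by (simp add: n_def)
    moreover have "d 0 \<in> {-1, 1}"
      using signs by simp
    ultimately show ?thesis
      using balanced by (auto simp: S_def e_def)
  next
    case False
    then have "odd p"
      using p prime_odd_nat p_gt by auto
    moreover have "even (S + int p)"
      using even_sum_signs_add_card[OF e_signs] by (simp only: S_def card)
    ultimately show ?thesis
      by auto
  qed
  moreover have "\<bar>S\<bar> \<le> int p"
    using abs_sum_signs_le_card[OF e_signs] by (simp only: S_def card)
  ultimately have "\<bar>sum e {0..n}\<bar> = int (card {0..n})"
    unfolding card S_def by (rule abs_eq_if_dvd_nonzero_abs_le)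
  then obtain c where c: "c \<in> {-1, 1}" "\<forall>i\<in>{0..n}. e i = c"
    using signs_constant_if_abs_sum_eq_card[OF finite_atLeastAtMost e_signs] by blast
  have "d = (\<lambda>i. if i \<le> n then c * (-1) ^ i else 0)"
  proof
    fix i
    show "d i = (if i \<le> n then c * (-1) ^ i else 0)"
      using c zero by (cases "i \<le> n") (auto simp: e_def minus_one_power_iff split: if_splits)
  qed
  with c that show ?thesis
    by (simp add: n_def)
qed

theorem theorem6:
  fixes p :: nat
  assumes "prime p"
  shows "J (p - 1) = 2 \<and>
    J_set (p - 1) = {(\<lambda>i. if i \<le> p - 1 then (-1) ^ i else 0),
                     (\<lambda>i. if i \<le> p - 1 then - ((-1) ^ i) else 0)}"
proof -
  let ?alt = "\<lambda>c i. if i \<le> p - 1 then c * (-1) ^ i else 0 :: int"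
  let ?pos = "\<lambda>i. if i \<le> p - 1 then (-1) ^ i else 0 :: int"
  let ?neg = "\<lambda>i. if i \<le> p - 1 then - ((-1) ^ i) else 0 :: int"
  have alt: "?alt 1 = ?pos" "?alt (-1) = ?neg"
    by auto
  have "p - 1 > 0"
    using assms prime_gt_1_nat by fastforce
  then have "?alt 1 \<in> J_set (p - 1)" "?alt (-1) \<in> J_set (p - 1)"
    by (simp_all add: alternating_sign_vector_in_J_set del: mult_1 mult_minus1)
  then have "?pos \<in> J_set (p - 1)" "?neg \<in> J_set (p - 1)"
    unfolding alt .
  moreover have "d = ?pos \<or> d = ?neg" if "d \<in> J_set (p - 1)" for d
    using J_set_prime_pred_alternating[OF assms that] alt by blast
  ultimately have "J_set (p - 1) = {?pos, ?neg}"
    by blast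
  moreover have "?pos \<noteq> ?neg"
    by (metis zero_le one_neq_neg_one power_0)
  ultimately show ?thesis
    by (simp add: J_def)
qed

end
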